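(* Let $A,C$ be logically independent events. (a) If $P(C)=1$, $P(C|A)=1$ and $P(C|\bar A)<1$ in a coherent assessment, then $P(A)=1$. (b) The family $\{C, C|A\}$ does not p-entail $A$, and the iterated conditional $A\,|\,(C\wedge(C|A))$, defined as $A\wedge C\wedge(C|A)+\mu(1-C\wedge(C|A))$ with $\mu$ its prevision, is not identically equal to $1$: if $P(C|A)=1$, every $\mu\in[0,1]$ is coherent and the iterated conditional takes value $1$ on $AC$, $0$ on $\bar AC$, and $\mu$ on $\bar C$. *)

theory Defs
  imports Complex_Main
begin

definition ind :: "'w set \<Rightarrow> 'w \<Rightarrow> real" where
  "ind E w = (if w \<in> E then 1 else 0)"

definition logically_independent :: "'w set \<Rightarrow> 'w set \<Rightarrow> bool" where
  "logically_independent A C \<longleftrightarrow>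
     A \<inter> C \<noteq> {} \<and> A - C \<noteq> {} \<and> C - A \<noteq> {} \<and> - (A \<union> C) \<noteq> {}"

(* The conditional event E|H as a random quantity, given P(E|H) = p:
   E|H = EH + p (not H). *)
definition cevent :: "'w set \<Rightarrow> 'w set \<Rightarrow> real \<Rightarrow> 'w \<Rightarrow> real" where
  "cevent E H p = (\<lambda>w. if w \<in> H then ind E w else p)"

(* An item of an assessment: (conditioning event H, conditional random quantity Z,
   assessed prevision mu).  Betting on it with stake s yields the gain s*(Z - mu),
   which is 0 where the bet is called off (outside H). *)
type_synonym 'w item = "'w set \<times> ('w \<Rightarrow> real) \<times> real"

definition ce_item :: "'w set \<Rightarrow> 'w set \<Rightarrow> real \<Rightarrow> 'w item" where
  "ce_item E H p = (H, cevent E H p, p)"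

definition coherent :: "'w item list \<Rightarrow> bool" where
  "coherent F \<longleftrightarrow>
     (\<forall>J. J \<subseteq> {..<length F} \<and> J \<noteq> {} \<longrightarrow>
        (\<forall>s :: nat \<Rightarrow> real. \<exists>w \<in> (\<Union>i\<in>J. fst (F ! i)).
            (\<Sum>i\<in>J. s i * (fst (snd (F ! i)) w - snd (snd (F ! i)))) \<ge> 0))"

(* a family of conditional events is a list of pairs (E, H) standing for E|H *)
definition p_consistent :: "('w set \<times> 'w set) list \<Rightarrow> bool" where
  "p_consistent F \<longleftrightarrow> coherent (map (\<lambda>(E, H). ce_item E H 1) F)"

definition p_entails :: "('w set \<times> 'w set) list \<Rightarrow> 'w set \<times> 'w set \<Rightarrow> bool" where
  "p_entails F G \<longleftrightarrow> p_consistent F \<and>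
     (\<forall>ps p. length ps = length F \<and>
        coherent (map (\<lambda>((E, H), q). ce_item E H q) (zip F ps) @ [ce_item (fst G) (snd G) p]) \<and>
        (\<forall>q \<in> set ps. q = 1) \<longrightarrow> p = 1)"

(* Conjunction C \<and> (C|A) of the event C with the conditional event C|A, where
   P(C|A) = y:  C \<and> (C|A) = C * (C|A) = AC + y (not A) C. *)
definition conj_C_CA :: "'w set \<Rightarrow> 'w set \<Rightarrow> real \<Rightarrow> 'w \<Rightarrow> real" where
  "conj_C_CA A C y = (\<lambda>w. ind C w * cevent C A y w)"

definition iter_cond :: "'w set \<Rightarrow> ('w \<Rightarrow> real) \<Rightarrow> real \<Rightarrow> 'w \<Rightarrow> real" where
  "iter_cond A Y mu = (\<lambda>w. ind A w * Y w + mu * (1 - Y w))"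

definition iter_item :: "'w set \<Rightarrow> ('w \<Rightarrow> real) \<Rightarrow> real \<Rightarrow> 'w item" where
  "iter_item A Y mu = ({w. Y w \<noteq> 0}, iter_cond A Y mu, mu)"

end

theory Submission
  imports Defs
begin

text \<open>
  For (a), the bets on C, C|A, C|\<not>A and A with stakes 1, -1, -1 and x - 1 have the constant
  gain (1 - x)(P(A) - 1), which is the arithmetic of P(C) = P(C|A) P(A) + P(C|\<not>A) P(\<not>A);
  coherence forbids a nonzero constant gain, so P(A) = 1.
  For (b), P(C) = P(C|A) = 1 together with P(A) = 0 is coherent: a point of C - A makes every
  bet fair, and a point of A \<inter> C serves the bet on C|A alone.
  For P(C|A) = 1 the conjunction C \<and> (C|A) is just the indicator of C, so the iterated conditional
  is a bet on A called off outside C, coherent for every prevision in [0, 1].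
\<close>

lemma coherentI_nonneg_terms:
  assumes "\<And>J s. J \<subseteq> {..<length F} \<Longrightarrow> J \<noteq> {} \<Longrightarrow>
             \<exists>w \<in> (\<Union>i\<in>J. fst (F ! i)).
               \<forall>i\<in>J. s i * (fst (snd (F ! i)) w - snd (snd (F ! i))) \<ge> 0"
  shows "coherent F"
  unfolding coherent_def
proof (intro allI impI)
  fix J s assume "J \<subseteq> {..<length F} \<and> J \<noteq> {}"
  with assms[of J s] obtain w where "w \<in> (\<Union>i\<in>J. fst (F ! i))"
    and "\<forall>i\<in>J. s i * (fst (snd (F ! i)) w - snd (snd (F ! i))) \<ge> 0"
    by blast
  then show "\<exists>w \<in> (\<Union>i\<in>J. fst (F ! i)).
               (\<Sum>i\<in>J. s i * (fst (snd (F ! i)) w - snd (snd (F ! i)))) \<ge> 0"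
    by (intro bexI[of _ w] sum_nonneg) auto
qed

lemma coherent_constant_gain_eq_0:
  assumes coh: "coherent F" and J: "J \<subseteq> {..<length F}" "J \<noteq> {}"
    and const: "\<And>w. w \<in> (\<Union>i\<in>J. fst (F ! i)) \<Longrightarrow>
                  (\<Sum>i\<in>J. s i * (fst (snd (F ! i)) w - snd (snd (F ! i)))) = c"
  shows "c = 0"
proof -
  have "\<exists>w \<in> (\<Union>i\<in>J. fst (F ! i)).
          (\<Sum>i\<in>J. t i * (fst (snd (F ! i)) w - snd (snd (F ! i)))) \<ge> 0" for t
    using coh J unfolding coherent_def by blast
  from this[of s] this[of "\<lambda>i. - s i"] have "c \<ge> 0" "- c \<ge> 0"
    using const by (fastforce simp: sum_negf)+
  then show ?thesis by simp
qed

lemma coherent_total_probability_forces_one: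
  fixes x a :: real
  assumes "x < 1"
    and coh: "coherent [ce_item C UNIV 1, ce_item C A 1, ce_item C (- A) x, ce_item A UNIV a]"
  shows "a = 1"
proof -
  let ?s = "\<lambda>i. [1, -1, -1, x - 1] ! i"
  have "(1 - x) * (a - 1) = 0"
  proof (rule coherent_constant_gain_eq_0[OF coh, of "{0, 1, 2, 3}" ?s])
    fix w
    show "(\<Sum>i\<in>{0, 1, 2, 3}. ?s i * (fst (snd (
            [ce_item C UNIV 1, ce_item C A 1, ce_item C (- A) x, ce_item A UNIV a] ! i)) w
          - snd (snd ([ce_item C UNIV 1, ce_item C A 1, ce_item C (- A) x, ce_item A UNIV a] ! i))))
          = (1 - x) * (a - 1)"
      by (cases "w \<in> A"; cases "w \<in> C")
        (simp_all add: ce_item_def cevent_def ind_def algebra_simps)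
  qed auto
  with \<open>x < 1\<close> show ?thesis by simp
qed

lemma coherent_certain_C_impossible_A:
  assumes "A \<inter> C \<noteq> {}" "C - A \<noteq> {}"
  shows "coherent [ce_item C UNIV 1, ce_item C A 1, ce_item A UNIV 0]"
    (is "coherent ?F")
proof (rule coherentI_nonneg_terms)
  obtain w0 where w0: "w0 \<in> C" "w0 \<notin> A" using assms by blast
  obtain w1 where w1: "w1 \<in> C" "w1 \<in> A" using assms by blast
  fix J s assume J: "J \<subseteq> {..<length ?F}" "J \<noteq> {}"
  then have J3: "J \<subseteq> {0, 1, 2}" by (auto simp: less_Suc_eq numeral_eq_Suc)
  show "\<exists>w \<in> (\<Union>i\<in>J. fst (?F ! i)). \<forall>i\<in>J. s i * (fst (snd (?F ! i)) w - snd (snd (?F ! i))) \<ge> 0"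
  proof (cases "J = {1}")
    case True
    with w1 show ?thesis by (auto simp: ce_item_def cevent_def ind_def)
  next
    case False
    with J3 J(2) obtain i where "i \<in> J" "i = 0 \<or> i = 2" by blast
    then have "w0 \<in> fst (?F ! i)" by (auto simp: ce_item_def)
    with \<open>i \<in> J\<close> have "w0 \<in> (\<Union>i\<in>J. fst (?F ! i))" by blast
    moreover have "\<forall>i\<in>J. s i * (fst (snd (?F ! i)) w0 - snd (snd (?F ! i))) = 0"
      using J3 w0 by (auto simp: ce_item_def cevent_def ind_def)
    ultimately show ?thesis by force
  qed
qed

lemma not_p_entails_A:
  assumes "A \<inter> C \<noteq> {}" "C - A \<noteq> {}"
  shows "\<not> p_entails [(C, UNIV), (C, A)] (A, UNIV)"
proof
  assume "p_entails [(C, UNIV), (C, A)] (A, UNIV)"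
  then have "(0::real) = 1"
    using coherent_certain_C_impossible_A[OF assms]
    unfolding p_entails_def by (auto dest!: spec[of _ "[1, 1]"] spec[of _ 0])
  then show False by simp
qed

lemma conj_C_CA_one: "conj_C_CA A C 1 = ind C"
  by (auto simp: conj_C_CA_def cevent_def ind_def)

lemma iter_cond_conj_C_CA_one:
  "iter_cond A (conj_C_CA A C 1) mu w = (if w \<in> A \<inter> C then 1 else if w \<in> C then 0 else mu)"
  by (simp add: conj_C_CA_one iter_cond_def ind_def)

lemma coherent_iter_cond_conj_C_CA_one:
  assumes "A \<inter> C \<noteq> {}" "C - A \<noteq> {}" and mu: "0 \<le> mu" "mu \<le> 1"
  shows "coherent [ce_item C A 1, iter_item A (conj_C_CA A C 1) mu]"
    (is "coherent ?F")
proof (rule coherentI_nonneg_terms)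
  obtain w0 where w0: "w0 \<in> C" "w0 \<notin> A" using assms by blast
  obtain w1 where w1: "w1 \<in> C" "w1 \<in> A" using assms by blast
  have F1: "?F ! 1 = (C, \<lambda>w. if w \<in> A \<inter> C then 1 else if w \<in> C then 0 else mu, mu)"
    by (simp add: iter_item_def fun_eq_iff iter_cond_conj_C_CA_one)
      (simp add: conj_C_CA_one ind_def set_eq_iff)
  fix J s assume J: "J \<subseteq> {..<length ?F}" "J \<noteq> {}"
  then have J2: "J \<subseteq> {0, 1}" by (auto simp: less_Suc_eq numeral_eq_Suc)
  then have ball_J: "(\<forall>i\<in>J. P i) \<longleftrightarrow> (0 \<in> J \<longrightarrow> P 0) \<and> (1 \<in> J \<longrightarrow> P 1)" for P
    by blast
  show "\<exists>w \<in> (\<Union>i\<in>J. fst (?F ! i)). \<forall>i\<in>J. s i * (fst (snd (?F ! i)) w - snd (snd (?F ! i))) \<ge> 0"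
  proof (cases "1 \<in> J \<and> s 1 < 0")
    case True
    then have "w0 \<in> (\<Union>i\<in>J. fst (?F ! i))" using F1 w0 by force
    moreover have "\<forall>i\<in>J. s i * (fst (snd (?F ! i)) w0 - snd (snd (?F ! i))) \<ge> 0"
      unfolding ball_J using True F1 w0 mu by (simp add: ce_item_def cevent_def ind_def mult_nonpos_nonneg)
    ultimately show ?thesis by blast
  next
    case False
    have "w1 \<in> (\<Union>i\<in>J. fst (?F ! i))"
      using J J2 F1 w1 by (force simp: ce_item_def)
    moreover have "\<forall>i\<in>J. s i * (fst (snd (?F ! i)) w1 - snd (snd (?F ! i))) \<ge> 0"
      unfolding ball_J using False F1 w1 mu by (auto simp: ce_item_def cevent_def ind_def)
    ultimately show ?thesis by blast
  qed
qed

theorem mainTheorem13: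
  fixes A C :: "'w set"
  assumes indep: "logically_independent A C"
  shows
    \<comment> \<open>(a)\<close>
    "(\<forall>x a. x < 1 \<longrightarrow>
        coherent [ce_item C UNIV 1, ce_item C A 1, ce_item C (- A) x] \<longrightarrow>
        coherent [ce_item C UNIV 1, ce_item C A 1, ce_item C (- A) x, ce_item A UNIV a] \<longrightarrow>
        a = 1)
   \<and>
    \<comment> \<open>(b) no p-entailment\<close>
    \<not> p_entails [(C, UNIV), (C, A)] (A, UNIV)
   \<and>
    \<comment> \<open>(b) iterated conditional, case P(C|A) = 1\<close>
    (\<forall>mu \<in> {0..1}.
        coherent [ce_item C A 1, iter_item A (conj_C_CA A C 1) mu]
      \<and> (\<forall>w. iter_cond A (conj_C_CA A C 1) mu w =
              (if w \<in> A \<inter> C then 1 else if w \<in> C then 0 else mu)))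
   \<and>
    (\<exists>mu \<in> {0..1}. coherent [ce_item C A 1, iter_item A (conj_C_CA A C 1) mu]
       \<and> \<not> (\<forall>w. iter_cond A (conj_C_CA A C 1) mu w = 1))"
proof (intro conjI)
  have AC: "A \<inter> C \<noteq> {}" "C - A \<noteq> {}" and "- C \<noteq> {}"
    using indep unfolding logically_independent_def by blast+
  show "\<forall>x a. x < 1 \<longrightarrow>
        coherent [ce_item C UNIV 1, ce_item C A 1, ce_item C (- A) x] \<longrightarrow>
        coherent [ce_item C UNIV 1, ce_item C A 1, ce_item C (- A) x, ce_item A UNIV a] \<longrightarrow>
        a = 1"
    using coherent_total_probability_forces_one by blast
  show "\<not> p_entails [(C, UNIV), (C, A)] (A, UNIV)"
    using AC by (rule not_p_entails_A)
  show "\<forall>mu \<in> {0..1}.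
          coherent [ce_item C A 1, iter_item A (conj_C_CA A C 1) mu]
        \<and> (\<forall>w. iter_cond A (conj_C_CA A C 1) mu w =
              (if w \<in> A \<inter> C then 1 else if w \<in> C then 0 else mu))"
    by (simp add: coherent_iter_cond_conj_C_CA_one[OF AC] iter_cond_conj_C_CA_one)
  obtain w2 where "w2 \<notin> C" using \<open>- C \<noteq> {}\<close> by blast
  then have "iter_cond A (conj_C_CA A C 1) 0 w2 \<noteq> 1"
    by (simp add: iter_cond_conj_C_CA_one)
  then show "\<exists>mu \<in> {0..1}. coherent [ce_item C A 1, iter_item A (conj_C_CA A C 1) mu]
       \<and> \<not> (\<forall>w. iter_cond A (conj_C_CA A C 1) mu w = 1)"
    using coherent_iter_cond_conj_C_CA_one[OF AC, of 0] by force
qed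

end
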